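(* Fix an epoch $t$ and a parameter vector $\theta^t\in\mathbb{R}^P$. Assume there are constants $\kappa_l>0$, $l\in\mathcal{L}$, such that $\|\nabla_l f(\theta^t)-\nabla_l f_i(\theta^t)\|^2\le\kappa_l^2$ for all $i\in\mathcal{N}$ and $l\in\mathcal{L}$. Then $$\mathcal{E}_t:=\Big\|\nabla f(\theta^t)-\sum_{l\in\mathcal{L}_t}\nabla_l h_l^t(\theta^t)\Big\|^2 \le 2\,\mathcal{E}_{t,1}+2\,\mathcal{E}_{t,2},$$ where $\mathcal{E}_{t,1}=\big\|\sum_{l\notin\mathcal{L}_t}\nabla_l f(\theta^t)\big\|^2$ and $\mathcal{E}_{t,2}=\sum_{l\in\mathcal{L}_t}\chi_{\mathbf{w}_{t,l}\|\alpha}\,\kappa_l^2$ with $\chi_{\mathbf{w}_{t,l}\|\alpha}=\sum_{i\in\mathcal{N}}\frac{(w_{i,l}^t-\alpha_i)^2}{\alpha_i}$.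
   Context: There are $N$ clients $\mathcal{N}=\{1,\dots,N\}$; client $i$ has $d_i>0$ samples and local objective $f_i:\mathbb{R}^P\to\mathbb{R}$ (differentiable). Let $\alpha_i=d_i/\sum_{j=1}^N d_j$ and $f=\sum_{i=1}^N\alpha_i f_i$. The parameter vector $\theta\in\mathbb{R}^P$ is partitioned into $L$ layers (blocks) indexed by $\mathcal{L}=\{1,\dots,L\}$; $\nabla_l F(\theta)$ denotes the gradient of $F$ with respect to the block of layer $l$, viewed as a vector of $\mathbb{R}^P$ with zeros outside that block. In epoch $t$, a set $\mathcal{S}^t\subseteq\mathcal{N}$ of clients participates, each $i\in\mathcal{S}^t$ has a selected layer set $\mathcal{L}_i^t\subseteq\mathcal{L}$, and $\mathcal{L}_t=\bigcup_{i\in\mathcal{S}^t}\mathcal{L}_i^t$. Weights: $w_{i,l}^t=d_i/\sum_{j\in\mathcal{S}^t:\,l\in\mathcal{L}_j^t}d_j$ if $i\in\mathcal{S}^t$ and $l\in\mathcal{L}_i^t$, and $w_{i,l}^t=0$ otherwise (for all $i\in\mathcal{N}$). Surrogate objective: $h_l^t(\theta)=\sum_{i\in\mathcal{S}^t}w_{i,l}^t f_i(\theta)$. *)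

theory Defs
  imports "HOL-Analysis.Analysis"
begin

definition grad :: "(real ^ 'p \<Rightarrow> real) \<Rightarrow> real ^ 'p \<Rightarrow> real ^ 'p" where
  "grad F x = (THE D. GDERIV F x :> D)"

text \<open>Layer-l block of the gradient; lay j is the layer of coordinate j;
  zeros outside the block.\<close>
definition block_grad :: "('p \<Rightarrow> nat) \<Rightarrow> nat \<Rightarrow> (real ^ 'p \<Rightarrow> real) \<Rightarrow> real ^ 'p \<Rightarrow> real ^ 'p" where
  "block_grad lay l F x = (\<chi> j. if lay j = l then grad F x $ j else 0)"

definition alpha :: "nat \<Rightarrow> (nat \<Rightarrow> real) \<Rightarrow> nat \<Rightarrow> real" where
  "alpha N d i = d i / (\<Sum>j\<in>{1..N}. d j)"

definition fglob :: "nat \<Rightarrow> (nat \<Rightarrow> real) \<Rightarrow> (nat \<Rightarrow> real ^ 'p \<Rightarrow> real) \<Rightarrow> real ^ 'p \<Rightarrow> real" where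
  "fglob N d fs x = (\<Sum>i\<in>{1..N}. alpha N d i * fs i x)"

definition wgt :: "nat set \<Rightarrow> (nat \<Rightarrow> nat set) \<Rightarrow> (nat \<Rightarrow> real) \<Rightarrow> nat \<Rightarrow> nat \<Rightarrow> real" where
  "wgt S Ls d i l = (if i \<in> S \<and> l \<in> Ls i
      then d i / (\<Sum>j\<in>{j\<in>S. l \<in> Ls j}. d j) else 0)"

definition surr :: "nat set \<Rightarrow> (nat \<Rightarrow> nat set) \<Rightarrow> (nat \<Rightarrow> real) \<Rightarrow> (nat \<Rightarrow> real ^ 'p \<Rightarrow> real) \<Rightarrow> nat \<Rightarrow> real ^ 'p \<Rightarrow> real" where
  "surr S Ls d fs l x = (\<Sum>i\<in>S. wgt S Ls d i l * fs i x)"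

end

theory Submission
  imports Defs
begin

text \<open>The error vector splits into its blocks outside \<open>\<L>\<^sub>t\<close>, which make up \<open>\<E>\<^sub>t\<^sub>,\<^sub>1\<close>,
  and the blocks \<open>\<nabla>\<^sub>l f - \<nabla>\<^sub>l h\<^sub>l\<^sup>t\<close> for \<open>l \<in> \<L>\<^sub>t\<close>; then \<open>\<parallel>a + b\<parallel>\<^sup>2 \<le> 2\<parallel>a\<parallel>\<^sup>2 + 2\<parallel>b\<parallel>\<^sup>2\<close>.
  The blocks are orthogonal, so the second part is the sum of the squared block errors.
  Since both \<open>w\<^sub>\<cdot>\<^sub>,\<^sub>l\<close> and \<open>\<alpha>\<close> sum to one, the block error of layer \<open>l\<close> equals
  \<open>\<Sum>\<^sub>i (w\<^sub>i\<^sub>,\<^sub>l - \<alpha>\<^sub>i) (\<nabla>\<^sub>l f - \<nabla>\<^sub>l f\<^sub>i)\<close>, and Cauchy-Schwarz with weights \<open>\<alpha>\<^sub>i\<close> bounds its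
  squared norm by \<open>\<chi>\<^sub>w\<^sub>\<parallel>\<^sub>\<alpha> \<Sum>\<^sub>i \<alpha>\<^sub>i \<kappa>\<^sub>l\<^sup>2 = \<chi>\<^sub>w\<^sub>\<parallel>\<^sub>\<alpha> \<kappa>\<^sub>l\<^sup>2\<close>.\<close>

lemma grad_eqI:
  fixes F :: "real ^ 'p \<Rightarrow> real"
  assumes "GDERIV F x :> D"
  shows "grad F x = D"
  unfolding grad_def
proof (rule the_equality)
  show "GDERIV F x :> D" by (fact assms)
next
  fix D' assume "GDERIV F x :> D'"
  then have "(\<lambda>h. h \<bullet> D') = (\<lambda>h. h \<bullet> D)"
    using has_derivative_unique assms unfolding gderiv_def by blast
  then have "(D' - D) \<bullet> D' = (D' - D) \<bullet> D" by meson
  then have "(D' - D) \<bullet> (D' - D) = 0" by (simp add: inner_diff_right)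
  then show "D' = D" by simp
qed

lemma has_gderiv_grad:
  fixes F :: "real ^ 'p \<Rightarrow> real"
  assumes "F differentiable (at x)"
  shows "GDERIV F x :> grad F x"
proof -
  obtain F' where F': "(F has_derivative F') (at x)"
    using assms differentiable_def by blast
  have "F' = (\<lambda>h. h \<bullet> adjoint F' 1)"
    using adjoint_works[OF has_derivative_linear[OF F']] by (simp add: fun_eq_iff)
  then have "GDERIV F x :> adjoint F' 1"
    unfolding gderiv_def using F' by simp
  then show ?thesis using grad_eqI by metis
qed

lemma grad_sum_scaled:
  fixes F :: "'i \<Rightarrow> real ^ 'p \<Rightarrow> real"
  assumes "finite I" and "\<And>i. i \<in> I \<Longrightarrow> F i differentiable (at x)"
  shows "grad (\<lambda>y. \<Sum>i\<in>I. c i * F i y) x = (\<Sum>i\<in>I. c i *\<^sub>R grad (F i) x)"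
proof (rule grad_eqI)
  have "((\<lambda>y. \<Sum>i\<in>I. c i * F i y) has_derivative (\<lambda>h. \<Sum>i\<in>I. c i * (h \<bullet> grad (F i) x))) (at x)"
    using has_gderiv_grad[OF assms(2)] unfolding gderiv_def
    by (intro has_derivative_sum has_derivative_mult_right) blast
  then show "GDERIV (\<lambda>y. \<Sum>i\<in>I. c i * F i y) x :> (\<Sum>i\<in>I. c i *\<^sub>R grad (F i) x)"
    unfolding gderiv_def by (simp add: inner_sum_right)
qed

definition block_proj :: "('p \<Rightarrow> nat) \<Rightarrow> nat \<Rightarrow> real ^ 'p \<Rightarrow> real ^ 'p" where
  "block_proj lay l v = (\<chi> j. if lay j = l then v $ j else 0)"

lemma block_grad_eq_block_proj: "block_grad lay l F x = block_proj lay l (grad F x)"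
  by (simp add: block_grad_def block_proj_def)

lemma linear_block_proj: "linear (block_proj lay l)"
  by (rule linearI) (simp_all add: block_proj_def vec_eq_iff)

lemma sum_block_proj_nth:
  assumes "finite A"
  shows "(\<Sum>l\<in>A. block_proj lay l (v l)) $ j = (if lay j \<in> A then v (lay j) $ j else 0)"
  using assms by (simp add: block_proj_def if_distrib sum.delta' cong: if_cong)

lemma power2_norm_vec_eq_sum: "(norm (x :: real ^ 'p))\<^sup>2 = (\<Sum>j\<in>UNIV. (x $ j)\<^sup>2)"
  unfolding power2_norm_eq_inner inner_vec_def by (simp add: power2_eq_square)

lemma power2_norm_sum_block_proj:
  assumes "finite A"
  shows "(norm (\<Sum>l\<in>A. block_proj lay l (v l)))\<^sup>2 = (\<Sum>l\<in>A. (norm (block_proj lay l (v l)))\<^sup>2)"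
proof -
  have "(\<Sum>l\<in>A. (norm (block_proj lay l (v l)))\<^sup>2)
      = (\<Sum>l\<in>A. \<Sum>j\<in>UNIV. if lay j = l then (v l $ j)\<^sup>2 else 0)"
    by (simp add: power2_norm_vec_eq_sum block_proj_def if_distrib[of "\<lambda>x. x\<^sup>2"] cong: if_cong)
  also have "\<dots> = (\<Sum>j\<in>UNIV. \<Sum>l\<in>A. if lay j = l then (v l $ j)\<^sup>2 else 0)"
    by (rule sum.swap)
  also have "\<dots> = (\<Sum>j\<in>UNIV. (if lay j \<in> A then v (lay j) $ j else 0)\<^sup>2)"
    using assms by (simp add: sum.delta' if_distrib[of "\<lambda>x. x\<^sup>2"] cong: if_cong)
  also have "\<dots> = (norm (\<Sum>l\<in>A. block_proj lay l (v l)))\<^sup>2"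
    by (simp only: power2_norm_vec_eq_sum sum_block_proj_nth[OF assms])
  finally show ?thesis by simp
qed

lemma diff_sum_block_proj_split:
  assumes "finite A" and "\<And>j. lay j \<in> A" and "B \<subseteq> A"
  shows "u - (\<Sum>l\<in>B. block_proj lay l (v l))
    = (\<Sum>l\<in>A - B. block_proj lay l u) + (\<Sum>l\<in>B. block_proj lay l (u - v l))"
proof -
  have "finite B" using assms(1,3) finite_subset by blast
  with assms show ?thesis
    by (simp add: vec_eq_iff sum_block_proj_nth del: sum_component)
qed

lemma power2_norm_add_le:
  fixes a b :: "'a :: real_normed_vector"
  shows "(norm (a + b))\<^sup>2 \<le> 2 * (norm a)\<^sup>2 + 2 * (norm b)\<^sup>2"
proof -
  have "(norm (a + b))\<^sup>2 \<le> (norm a + norm b)\<^sup>2"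
    by (rule power_mono[OF norm_triangle_ineq]) simp
  also have "\<dots> \<le> 2 * (norm a)\<^sup>2 + 2 * (norm b)\<^sup>2"
    using sum_squares_ge_zero[of "norm a - norm b" 0]
    by (simp add: power2_eq_square algebra_simps)
  finally show ?thesis .
qed

lemma weighted_Cauchy_Schwarz:
  fixes c a n :: "'i \<Rightarrow> real"
  assumes "\<And>i. i \<in> I \<Longrightarrow> a i > 0"
  shows "(\<Sum>i\<in>I. \<bar>c i\<bar> * n i)\<^sup>2 \<le> (\<Sum>i\<in>I. (c i)\<^sup>2 / a i) * (\<Sum>i\<in>I. a i * (n i)\<^sup>2)"
proof -
  have "(\<Sum>i\<in>I. \<bar>c i\<bar> * n i) = (\<Sum>i\<in>I. (\<bar>c i\<bar> / sqrt (a i)) * (sqrt (a i) * n i))"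
  proof (intro sum.cong refl)
    fix i assume "i \<in> I"
    then have "sqrt (a i) > 0" using assms by simp
    then show "\<bar>c i\<bar> * n i = \<bar>c i\<bar> / sqrt (a i) * (sqrt (a i) * n i)" by simp
  qed
  moreover have "(\<Sum>i\<in>I. (\<bar>c i\<bar> / sqrt (a i))\<^sup>2) = (\<Sum>i\<in>I. (c i)\<^sup>2 / a i)"
    using assms by (intro sum.cong) (auto simp: power_divide less_imp_le)
  moreover have "(\<Sum>i\<in>I. (sqrt (a i) * n i)\<^sup>2) = (\<Sum>i\<in>I. a i * (n i)\<^sup>2)"
    using assms by (intro sum.cong) (auto simp: power_mult_distrib less_imp_le)
  ultimately show ?thesis
    using Cauchy_Schwarz_ineq_sum[of "\<lambda>i. \<bar>c i\<bar> / sqrt (a i)" "\<lambda>i. sqrt (a i) * n i" I]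
    by simp
qed

lemma sum_weight_diff_scaleR_diff:
  fixes z :: "'i \<Rightarrow> 'a :: real_vector"
  assumes "sum w I = sum a I"
  shows "(\<Sum>i\<in>I. (w i - a i) *\<^sub>R (v - z i)) = (\<Sum>i\<in>I. a i *\<^sub>R z i) - (\<Sum>i\<in>I. w i *\<^sub>R z i)"
proof -
  have "(\<Sum>i\<in>I. (w i - a i) *\<^sub>R (v - z i))
      = (\<Sum>i\<in>I. (w i - a i) *\<^sub>R v) - (\<Sum>i\<in>I. (w i - a i) *\<^sub>R z i)"
    by (simp add: scaleR_diff_right sum_subtractf)
  also have "(\<Sum>i\<in>I. (w i - a i) *\<^sub>R v) = 0"
    using assms by (simp add: sum_subtractf flip: scaleR_sum_left)
  also have "(\<Sum>i\<in>I. (w i - a i) *\<^sub>R z i) = (\<Sum>i\<in>I. w i *\<^sub>R z i) - (\<Sum>i\<in>I. a i *\<^sub>R z i)"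
    by (simp add: scaleR_diff_left sum_subtractf)
  finally show ?thesis by simp
qed

lemma power2_norm_sum_weight_diff_le:
  fixes y :: "'i \<Rightarrow> 'a :: real_normed_vector"
  assumes a_pos: "\<And>i. i \<in> I \<Longrightarrow> a i > 0" and a_sum: "sum a I = 1"
    and y_bound: "\<And>i. i \<in> I \<Longrightarrow> (norm (y i))\<^sup>2 \<le> K"
  shows "(norm (\<Sum>i\<in>I. (w i - a i) *\<^sub>R y i))\<^sup>2 \<le> (\<Sum>i\<in>I. (w i - a i)\<^sup>2 / a i) * K"
proof -
  have "norm (\<Sum>i\<in>I. (w i - a i) *\<^sub>R y i) \<le> (\<Sum>i\<in>I. \<bar>w i - a i\<bar> * norm (y i))"
    using norm_sum[of "\<lambda>i. (w i - a i) *\<^sub>R y i" I] by simp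
  then have "(norm (\<Sum>i\<in>I. (w i - a i) *\<^sub>R y i))\<^sup>2 \<le> (\<Sum>i\<in>I. \<bar>w i - a i\<bar> * norm (y i))\<^sup>2"
    by (rule power_mono) simp
  also have "\<dots> \<le> (\<Sum>i\<in>I. (w i - a i)\<^sup>2 / a i) * (\<Sum>i\<in>I. a i * (norm (y i))\<^sup>2)"
    by (rule weighted_Cauchy_Schwarz[OF a_pos])
  also have "\<dots> \<le> (\<Sum>i\<in>I. (w i - a i)\<^sup>2 / a i) * (\<Sum>i\<in>I. a i * K)"
    using a_pos y_bound
    by (intro mult_left_mono sum_mono sum_nonneg) (auto simp: less_imp_le)
  also have "\<dots> = (\<Sum>i\<in>I. (w i - a i)\<^sup>2 / a i) * K"
    using a_sum by (simp flip: sum_distrib_right)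
  finally show ?thesis .
qed

lemma alpha_pos:
  assumes "\<And>i. i \<in> {1..N} \<Longrightarrow> d i > 0" and "i \<in> {1..N}"
  shows "alpha N d i > 0"
proof -
  have "(\<Sum>j\<in>{1..N}. d j) > 0"
    using assms by (intro sum_pos) auto
  then show ?thesis using assms by (simp add: alpha_def)
qed

lemma sum_alpha_eq_1:
  assumes "\<And>i. i \<in> {1..N} \<Longrightarrow> d i > 0" and "0 < N"
  shows "(\<Sum>i\<in>{1..N}. alpha N d i) = 1"
proof -
  have "(\<Sum>j\<in>{1..N}. d j) > 0"
    using assms by (intro sum_pos) auto
  then show ?thesis by (simp add: alpha_def flip: sum_divide_distrib)
qed

lemma sum_wgt_eq_1:
  assumes "finite I" and "S \<subseteq> I" and d_pos: "\<And>i. i \<in> S \<Longrightarrow> d i > 0"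
    and "k \<in> S" and "l \<in> Ls k"
  shows "(\<Sum>i\<in>I. wgt S Ls d i l) = 1"
proof -
  define T where "T = {j\<in>S. l \<in> Ls j}"
  have "finite T" using assms(2) by (auto intro: finite_subset[OF _ assms(1)] simp: T_def)
  moreover have "k \<in> T" using assms(4,5) unfolding T_def by blast
  ultimately have T_pos: "(\<Sum>j\<in>T. d j) > 0"
    using d_pos by (intro sum_pos) (auto simp: T_def)
  have "(\<Sum>i\<in>I. wgt S Ls d i l) = (\<Sum>i\<in>T. d i / (\<Sum>j\<in>T. d j))"
    using assms(1,2) by (intro sum.mono_neutral_cong_right) (auto simp: T_def wgt_def)
  also have "\<dots> = 1" using T_pos by (simp flip: sum_divide_distrib)
  finally show ?thesis .
qed

lemma grad_fglob:
  assumes "\<And>i. i \<in> {1..N} \<Longrightarrow> fs i differentiable (at x)"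
  shows "grad (fglob N d fs) x = (\<Sum>i\<in>{1..N}. alpha N d i *\<^sub>R grad (fs i) x)"
proof -
  have "fglob N d fs = (\<lambda>y. \<Sum>i\<in>{1..N}. alpha N d i * fs i y)"
    by (simp add: fun_eq_iff fglob_def)
  then show ?thesis using grad_sum_scaled[of "{1..N}" fs] assms by simp
qed

lemma grad_surr:
  assumes "S \<subseteq> {1..N}" and "\<And>i. i \<in> {1..N} \<Longrightarrow> fs i differentiable (at x)"
  shows "grad (surr S Ls d fs l) x = (\<Sum>i\<in>{1..N}. wgt S Ls d i l *\<^sub>R grad (fs i) x)"
proof -
  have "finite S" using assms(1) finite_subset by blast
  have "surr S Ls d fs l = (\<lambda>y. \<Sum>i\<in>S. wgt S Ls d i l * fs i y)"
    by (simp add: fun_eq_iff surr_def)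
  then have "grad (surr S Ls d fs l) x = (\<Sum>i\<in>S. wgt S Ls d i l *\<^sub>R grad (fs i) x)"
    using grad_sum_scaled[OF \<open>finite S\<close>, of fs] assms by (simp add: subset_iff)
  also have "\<dots> = (\<Sum>i\<in>{1..N}. wgt S Ls d i l *\<^sub>R grad (fs i) x)"
    using assms(1) by (intro sum.mono_neutral_left) (auto simp: wgt_def)
  finally show ?thesis .
qed

lemma power2_norm_block_grad_surr_error_le:
  assumes d_pos: "\<And>i. i \<in> {1..N} \<Longrightarrow> d i > 0"
    and diff: "\<And>i. i \<in> {1..N} \<Longrightarrow> fs i differentiable (at \<theta>)"
    and S_sub: "S \<subseteq> {1..N}" and "k \<in> S" and "l \<in> Ls k"
    and hetero: "\<And>i. i \<in> {1..N} \<Longrightarrow>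
        (norm (block_grad lay l (fglob N d fs) \<theta> - block_grad lay l (fs i) \<theta>))\<^sup>2 \<le> K"
  shows "(norm (block_grad lay l (fglob N d fs) \<theta> - block_grad lay l (surr S Ls d fs l) \<theta>))\<^sup>2
    \<le> (\<Sum>i\<in>{1..N}. (wgt S Ls d i l - alpha N d i)\<^sup>2 / alpha N d i) * K"
proof -
  let ?P = "block_proj lay l" and ?g = "\<lambda>i. grad (fs i) \<theta>"
  have "0 < N" using S_sub \<open>k \<in> S\<close> by auto
  then have sum_alpha: "(\<Sum>i\<in>{1..N}. alpha N d i) = 1"
    using sum_alpha_eq_1 d_pos by blast
  have sum_wgt: "(\<Sum>i\<in>{1..N}. wgt S Ls d i l) = 1"
    using S_sub d_pos assms(4,5) by (intro sum_wgt_eq_1) auto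
  have "grad (fglob N d fs) \<theta> = (\<Sum>i\<in>{1..N}. alpha N d i *\<^sub>R ?g i)"
    using diff by (rule grad_fglob)
  then have fglob_block:
      "block_grad lay l (fglob N d fs) \<theta> = (\<Sum>i\<in>{1..N}. alpha N d i *\<^sub>R ?P (?g i))"
    by (simp add: block_grad_eq_block_proj linear_sum[OF linear_block_proj]
        linear_scale[OF linear_block_proj])
  have "grad (surr S Ls d fs l) \<theta> = (\<Sum>i\<in>{1..N}. wgt S Ls d i l *\<^sub>R ?g i)"
    using S_sub diff by (rule grad_surr)
  then have
      "block_grad lay l (surr S Ls d fs l) \<theta> = (\<Sum>i\<in>{1..N}. wgt S Ls d i l *\<^sub>R ?P (?g i))"
    by (simp add: block_grad_eq_block_proj linear_sum[OF linear_block_proj]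
        linear_scale[OF linear_block_proj])
  with fglob_block have
      "(norm (block_grad lay l (fglob N d fs) \<theta> - block_grad lay l (surr S Ls d fs l) \<theta>))\<^sup>2
      = (norm (\<Sum>i\<in>{1..N}. (wgt S Ls d i l - alpha N d i) *\<^sub>R
          (block_grad lay l (fglob N d fs) \<theta> - ?P (?g i))))\<^sup>2"
    using sum_wgt sum_alpha by (simp only: sum_weight_diff_scaleR_diff)
  also have "\<dots> \<le> (\<Sum>i\<in>{1..N}. (wgt S Ls d i l - alpha N d i)\<^sup>2 / alpha N d i) * K"
    using alpha_pos[OF d_pos] sum_alpha hetero
    by (intro power2_norm_sum_weight_diff_le) (auto simp: block_grad_eq_block_proj)
  finally show ?thesis .
qed

theorem lemma2:
  fixes N L :: nat
    and d :: "nat \<Rightarrow> real"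
    and fs :: "nat \<Rightarrow> real ^ 'p \<Rightarrow> real"
    and lay :: "'p \<Rightarrow> nat"
    and S :: "nat set" and Ls :: "nat \<Rightarrow> nat set"
    and \<theta> :: "real ^ 'p" and \<kappa> :: "nat \<Rightarrow> real"
  assumes d_pos: "\<And>i. i \<in> {1..N} \<Longrightarrow> d i > 0"
    and diff: "\<And>i x. i \<in> {1..N} \<Longrightarrow> fs i differentiable (at x)"
    and lay_range: "\<And>j. lay j \<in> {1..L}"
    and lay_onto: "\<And>l. l \<in> {1..L} \<Longrightarrow> \<exists>j. lay j = l"
    and S_sub: "S \<subseteq> {1..N}"
    and Ls_sub: "\<And>i. i \<in> S \<Longrightarrow> Ls i \<subseteq> {1..L}"
    and kappa_pos: "\<And>l. l \<in> {1..L} \<Longrightarrow> \<kappa> l > 0"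
    and hetero: "\<And>i l. i \<in> {1..N} \<Longrightarrow> l \<in> {1..L} \<Longrightarrow>
        (norm (block_grad lay l (fglob N d fs) \<theta> - block_grad lay l (fs i) \<theta>))\<^sup>2 \<le> (\<kappa> l)\<^sup>2"
  shows "(let Lt = (\<Union>i\<in>S. Ls i);
              E = (norm (grad (fglob N d fs) \<theta>
                     - (\<Sum>l\<in>Lt. block_grad lay l (surr S Ls d fs l) \<theta>)))\<^sup>2;
              E1 = (norm (\<Sum>l\<in>{1..L} - Lt. block_grad lay l (fglob N d fs) \<theta>))\<^sup>2;
              E2 = (\<Sum>l\<in>Lt. (\<Sum>i\<in>{1..N}. (wgt S Ls d i l - alpha N d i)\<^sup>2 / alpha N d i)
                     * (\<kappa> l)\<^sup>2)
          in E \<le> 2 * E1 + 2 * E2)"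
proof -
  define Lt where "Lt = (\<Union>i\<in>S. Ls i)"
  define u where "u = grad (fglob N d fs) \<theta>"
  define v where "v l = grad (surr S Ls d fs l) \<theta>" for l
  define chi_sq where "chi_sq l = (\<Sum>i\<in>{1..N}. (wgt S Ls d i l - alpha N d i)\<^sup>2 / alpha N d i)" for l
  have Lt_sub: "Lt \<subseteq> {1..L}" using Ls_sub unfolding Lt_def by blast
  then have "finite Lt" using finite_subset by blast
  have split: "u - (\<Sum>l\<in>Lt. block_proj lay l (v l))
      = (\<Sum>l\<in>{1..L} - Lt. block_proj lay l u) + (\<Sum>l\<in>Lt. block_proj lay l (u - v l))"
    using lay_range Lt_sub by (intro diff_sum_block_proj_split) auto
  have "(norm (\<Sum>l\<in>Lt. block_proj lay l (u - v l)))\<^sup>2 \<le> (\<Sum>l\<in>Lt. chi_sq l * (\<kappa> l)\<^sup>2)"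
    unfolding power2_norm_sum_block_proj[OF \<open>finite Lt\<close>]
  proof (rule sum_mono)
    fix l assume "l \<in> Lt"
    then obtain k where k: "k \<in> S" "l \<in> Ls k" unfolding Lt_def by blast
    then have "l \<in> {1..L}" using Ls_sub by blast
    have "block_proj lay l (u - v l)
        = block_grad lay l (fglob N d fs) \<theta> - block_grad lay l (surr S Ls d fs l) \<theta>"
      by (simp add: u_def v_def block_grad_eq_block_proj linear_diff[OF linear_block_proj])
    also have "(norm \<dots>)\<^sup>2 \<le> chi_sq l * (\<kappa> l)\<^sup>2"
      unfolding chi_sq_def using d_pos diff S_sub k hetero \<open>l \<in> {1..L}\<close>
      by (intro power2_norm_block_grad_surr_error_le) auto
    finally show "(norm (block_proj lay l (u - v l)))\<^sup>2 \<le> chi_sq l * (\<kappa> l)\<^sup>2" .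
  qed
  then have "(norm (u - (\<Sum>l\<in>Lt. block_proj lay l (v l))))\<^sup>2
      \<le> 2 * (norm (\<Sum>l\<in>{1..L} - Lt. block_proj lay l u))\<^sup>2
        + 2 * (\<Sum>l\<in>Lt. chi_sq l * (\<kappa> l)\<^sup>2)"
    unfolding split using power2_norm_add_le by (smt (verit))
  then show ?thesis
    unfolding Let_def block_grad_eq_block_proj by (simp add: Lt_def u_def v_def chi_sq_def)
qed

end
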